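(* Let $n\ge 1$ and let $T$ be an HR-tree whose labels are $1,\dots,n$. If $\mathrm{leaf}(T)=i$, then the permutation $w(T)\in\mathfrak S_n$ satisfies $\mathrm{run}(w(T))\ge i$.
   Context: All trees are rooted binary trees in which each child of a node is designated as a left or a right child. For a finite totally ordered set $Y$, a min–max tree on $Y$ is such a tree whose nodes are labeled bijectively by $Y$ so that the label of each node is either the minimum or the maximum of the labels in the subtree rooted at that node. A node with at least one child is an inner node; an inner node is a min-node (resp. max-node) if its label is the minimum (resp. maximum) of the labels of its subtree. An HR-tree is a min–max tree in which every inner node $s$ has a nonempty right subtree, and this right subtree contains the maximum label of the subtree rooted at $s$ if $s$ is a min-node, and the minimum label of that subtree if $s$ is a max-node (so a node with exactly one child has only a right child). The reading word $w(T)$ is the in-order reading: $w(T)=w(L)\,\ell\,w(R)$ where $\ell$ is the root label and $L,R$ are the left and right subtrees ($w(\emptyset)$ empty). $\mathrm{leaf}(T)$ is the number of nodes of $T$ without children. For $\pi=\pi_1\cdots\pi_n\in\mathfrak S_n$, $\pi$ changes direction at $i\in\{2,\dots,n-1\}$ if $\pi_{i-1}<\pi_i>\pi_{i+1}$ or $\pi_{i-1}>\pi_i<\pi_{i+1}$, and $\mathrm{run}(\pi)$ (the number of alternating runs) is $1$ plus the number of such indices $i$. *)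

theory Defs
  imports Main "HOL-Library.Tree"
begin

definition inner_node :: "'a tree \<Rightarrow> 'a tree \<Rightarrow> bool" where
  "inner_node l r \<longleftrightarrow> l \<noteq> Leaf \<or> r \<noteq> Leaf"

fun minmax_tree :: "nat tree \<Rightarrow> bool" where
  "minmax_tree Leaf = True"
| "minmax_tree (Node l a r) =
     (minmax_tree l \<and> minmax_tree r \<and>
      (a = Min (set_tree (Node l a r)) \<or> a = Max (set_tree (Node l a r))))"

fun hr_cond :: "nat tree \<Rightarrow> bool" where
  "hr_cond Leaf = True"
| "hr_cond (Node l a r) =
     (hr_cond l \<and> hr_cond r \<and>
      (inner_node l r \<longrightarrow>
         (r \<noteq> Leaf \<and>
          (a = Min (set_tree (Node l a r)) \<longrightarrow> Max (set_tree (Node l a r)) \<in> set_tree r) \<and>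
          (a = Max (set_tree (Node l a r)) \<longrightarrow> Min (set_tree (Node l a r)) \<in> set_tree r))))"

definition HR_tree :: "nat tree \<Rightarrow> bool" where
  "HR_tree T \<longleftrightarrow> minmax_tree T \<and> hr_cond T"

text \<open>Number of nodes without children.\<close>
fun leaf_count :: "'a tree \<Rightarrow> nat" where
  "leaf_count Leaf = 0"
| "leaf_count (Node l a r) =
     (if l = Leaf \<and> r = Leaf then 1 else leaf_count l + leaf_count r)"

text \<open>Reading word = in-order traversal (library function inorder).
  Number of alternating runs, with 0-based indices: position i (0 < i < length - 1)
  is a change of direction.\<close>
definition changes_dir :: "nat list \<Rightarrow> nat \<Rightarrow> bool" where
  "changes_dir w i \<longleftrightarrow>
     (w ! (i - 1) < w ! i \<and> w ! i > w ! (i + 1)) \<or>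
     (w ! (i - 1) > w ! i \<and> w ! i < w ! (i + 1))"

definition run :: "nat list \<Rightarrow> nat" where
  "run w = 1 + card {i. 0 < i \<and> i + 1 < length w \<and> changes_dir w i}"

end

theory Submission
  imports Defs
begin

text \<open>The labels of the two subtrees of a node all lie on the same side of the root label, so
  the root of a tree with two nonempty subtrees is a peak or a valley of the reading word,
  separating the direction changes of the left subtree from those of the right one. Induction
  on the tree then gives at least one alternating run per leaf.\<close>

definition dir_changes :: "nat list \<Rightarrow> nat set" where
  "dir_changes w = {i. 0 < i \<and> i + 1 < length w \<and> changes_dir w i}"

lemma run_eq_card_dir_changes: "run w = 1 + card (dir_changes w)"
  by (simp add: run_def dir_changes_def)

lemma finite_dir_changes: "finite (dir_changes w)"
  by (rule finite_subset[of _ "{..<length w}"]) (auto simp: dir_changes_def)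

lemma dir_changes_append_left: "dir_changes xs \<subseteq> dir_changes (xs @ ys)"
  by (auto simp: dir_changes_def changes_dir_def nth_append)

lemma dir_changes_append_right:
  "(\<lambda>i. i + length xs) ` dir_changes ys \<subseteq> dir_changes (xs @ ys)"
proof
  fix j assume "j \<in> (\<lambda>i. i + length xs) ` dir_changes ys"
  then obtain i where j: "j = i + length xs" and i: "i \<in> dir_changes ys" by blast
  then have "0 < i" "i + 1 < length ys" by (auto simp: dir_changes_def)
  then have "(xs @ ys) ! (j - 1) = ys ! (i - 1)"
    "(xs @ ys) ! j = ys ! i" "(xs @ ys) ! (j + 1) = ys ! (i + 1)"
    by (auto simp: j nth_append)
  with i show "j \<in> dir_changes (xs @ ys)"
    by (auto simp: j dir_changes_def changes_dir_def)
qed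

lemma run_append_left_le: "run xs \<le> run (xs @ ys)"
  unfolding run_eq_card_dir_changes
  by (simp add: card_mono finite_dir_changes dir_changes_append_left)

lemma run_append_right_le: "run ys \<le> run (xs @ ys)"
proof -
  have "card (dir_changes ys) = card ((\<lambda>i. i + length xs) ` dir_changes ys)"
    by (simp add: card_image)
  also have "\<dots> \<le> card (dir_changes (xs @ ys))"
    by (intro card_mono finite_dir_changes dir_changes_append_right)
  finally show ?thesis unfolding run_eq_card_dir_changes by simp
qed

lemma run_add_le_run_extremal_middle:
  assumes "u \<noteq> []" "v \<noteq> []"
    and extremal: "(\<forall>x \<in> set u \<union> set v. a < x) \<or> (\<forall>x \<in> set u \<union> set v. x < a)"
  shows "run u + run v \<le> run (u @ a # v)"
proof -
  let ?w = "u @ a # v"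
  have peak: "length u \<in> dir_changes ?w"
  proof -
    have "?w ! (length u - 1) = last u" "?w ! length u = a" "?w ! (length u + 1) = hd v"
      using assms(1,2) by (simp_all add: nth_append last_conv_nth hd_conv_nth)
    moreover have "last u \<in> set u" "hd v \<in> set v" using assms(1,2) by auto
    ultimately show ?thesis using assms by (auto simp: dir_changes_def changes_dir_def)
  qed
  let ?A = "insert (length u) (dir_changes u)"
  let ?B = "(\<lambda>i. i + length (u @ [a])) ` dir_changes v"
  have "?A \<inter> ?B = {}" by (auto simp: dir_changes_def)
  moreover have "length u \<notin> dir_changes u" by (simp add: dir_changes_def)
  ultimately have "card (dir_changes u) + 1 + card (dir_changes v) = card (?A \<union> ?B)"
    by (simp add: card_Un_disjoint card_image inj_on_def finite_dir_changes)
  also have "\<dots> \<le> card (dir_changes ?w)"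
    using peak dir_changes_append_left[of u "a # v"] dir_changes_append_right[of "u @ [a]" v]
    by (intro card_mono finite_dir_changes) auto
  finally show ?thesis unfolding run_eq_card_dir_changes by simp
qed

lemma minmax_root_extremal:
  assumes "minmax_tree (Node l a r)" and "distinct (inorder (Node l a r))"
  shows "(\<forall>x \<in> set_tree l \<union> set_tree r. a < x) \<or> (\<forall>x \<in> set_tree l \<union> set_tree r. x < a)"
proof -
  have fresh: "a \<notin> set_tree l \<union> set_tree r" using assms(2) by simp
  have "a = Min (set_tree (Node l a r)) \<or> a = Max (set_tree (Node l a r))"
    using assms(1) by simp
  then have "(\<forall>x \<in> set_tree l \<union> set_tree r. a \<le> x) \<or> (\<forall>x \<in> set_tree l \<union> set_tree r. x \<le> a)"
    by (metis Max_ge Min_le finite_set_tree tree.set_intros(1,3) UnE)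
  with fresh show ?thesis by (metis order.not_eq_order_implies_strict)
qed

lemma leaf_count_le_run:
  "minmax_tree T \<Longrightarrow> distinct (inorder T) \<Longrightarrow> leaf_count T \<le> run (inorder T)"
proof (induction T)
  case Leaf
  then show ?case by simp
next
  case (Node l a r)
  then have IH: "leaf_count l \<le> run (inorder l)" "leaf_count r \<le> run (inorder r)" by auto
  consider "l = Leaf" "r = Leaf" | "l = Leaf" "r \<noteq> Leaf" | "l \<noteq> Leaf" "r = Leaf"
    | "l \<noteq> Leaf" "r \<noteq> Leaf" by blast
  then show ?case
  proof cases
    case 1
    then show ?thesis by (simp add: run_def)
  next
    case 2
    then show ?thesis
      using IH(2) run_append_right_le[where xs = "[a]" and ys = "inorder r"] by simp
  next
    case 3
    then show ?thesis
      using IH(1) run_append_left_le[where xs = "inorder l" and ys = "[a]"] by simp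
  next
    case 4
    then have "run (inorder l) + run (inorder r) \<le> run (inorder (Node l a r))"
      using minmax_root_extremal[OF Node.prems]
      by (simp add: run_add_le_run_extremal_middle)
    with 4 IH show ?thesis by simp
  qed
qed

theorem mainTheorem1:
  fixes T :: "nat tree" and n i :: nat
  assumes "n \<ge> 1"
    and "HR_tree T"
    and "distinct (inorder T)"
    and "set_tree T = {1..n}"
    and "leaf_count T = i"
  shows "run (inorder T) \<ge> i"
  using leaf_count_le_run assms(2,3,5) by (auto simp: HR_tree_def)

end
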